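(* Let $f_1$ and $f_2$ be polynomials (with rational coefficients in variables including $\alpha_1$ and $\alpha_l$) that are linear in $\alpha_1$, where $\alpha_l\neq\alpha_1$. For a polynomial $f$, let $lc(f)$ denote the leading coefficient of $f$ with respect to $\alpha_l$. Then either (1) $\frac{\partial\, lc(f_1)}{\partial\alpha_1}\, lc(f_2)|_{\alpha_1=0}-\frac{\partial\, lc(f_2)}{\partial\alpha_1}\, lc(f_1)|_{\alpha_1=0}=0$, or (2) $\frac{\partial\, lc(f_1)}{\partial\alpha_1}\, lc(f_2)|_{\alpha_1=0}-\frac{\partial\, lc(f_2)}{\partial\alpha_1}\, lc(f_1)|_{\alpha_1=0}= lc\!\left(\frac{\partial f_1}{\partial\alpha_1}\, f_2|_{\alpha_1=0}-\frac{\partial f_2}{\partial\alpha_1}\, f_1|_{\alpha_1=0}\right)$.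
   Context: A polynomial is linear in a variable $x$ if its degree in $x$ is at most one (it may be constant in $x$). The leading coefficient of a polynomial $f$ with respect to $\alpha_l$ is the coefficient (a polynomial in the remaining variables) of the highest power of $\alpha_l$ occurring in $f$. *)

theory Defs
  imports "HOL-Computational_Algebra.Polynomial"
begin

text \<open>Representation: a polynomial in the variables alpha_l, alpha_1 and further
variables is an element of R[alpha_1][alpha_l], i.e. of type 'a poly poly, where the
outer indeterminate is alpha_l, the inner one is alpha_1, and the coefficient ring 'a
stands for the polynomials (over the rationals) in the remaining variables.\<close>

definition linear_in_a1 :: "'a::idom poly poly \<Rightarrow> bool" where
  "linear_in_a1 f \<longleftrightarrow> (\<forall>i. degree (coeff f i) \<le> 1)"

definition d_a1 :: "'a::idom poly poly \<Rightarrow> 'a poly poly" where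
  "d_a1 f = map_poly pderiv f"

definition at_a1_0 :: "'a::idom poly poly \<Rightarrow> 'a poly poly" where
  "at_a1_0 f = map_poly (\<lambda>c. [:poly c 0:]) f"

definition lc_al :: "'a::idom poly poly \<Rightarrow> 'a poly" where
  "lc_al f = lead_coeff f"

definition at_a1_0' :: "'a::idom poly \<Rightarrow> 'a poly" where
  "at_a1_0' c = [:poly c 0:]"

end

theory Submission
  imports Defs
begin

text \<open>Differentiation in \<open>\<alpha>\<^sub>1\<close> and the substitution \<open>\<alpha>\<^sub>1 = 0\<close> act coefficientwise in
\<open>\<alpha>\<^sub>l\<close> and cannot raise the \<open>\<alpha>\<^sub>l\<close>-degree. Hence in
\<open>g = \<partial>f\<^sub>1 \<cdot> f\<^sub>2|\<^sub>0 - \<partial>f\<^sub>2 \<cdot> f\<^sub>1|\<^sub>0\<close> every term has \<open>\<alpha>\<^sub>l\<close>-degree at most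
\<open>deg f\<^sub>1 + deg f\<^sub>2\<close>, and the coefficient of \<open>\<alpha>\<^sub>l\<close> to that power is exactly the left-hand side.
A coefficient at an upper bound of the degree is either zero or the leading coefficient.\<close>

lemma coeff_mult_at_degree_bounds:
  fixes p q :: "'b::comm_semiring_0 poly"
  assumes "degree p \<le> n" "degree q \<le> m"
  shows "coeff (p * q) (n + m) = coeff p n * coeff q m"
proof (cases "degree p = n \<and> degree q = m")
  case True
  then show ?thesis using coeff_mult_degree_sum[of p q] by simp
next
  case False
  then have "degree p < n \<or> degree q < m" using assms by auto
  then have "degree (p * q) < n + m" and "coeff p n * coeff q m = 0"
    using assms degree_mult_le[of p q] by (auto simp: coeff_eq_0)
  then show ?thesis by (simp add: coeff_eq_0)
qed

lemma coeff_at_degree_bound_eq_0_or_lead_coeff: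
  assumes "degree g \<le> k"
  shows "coeff g k = 0 \<or> coeff g k = lead_coeff g"
  using assms le_degree le_antisym by metis

lemma coeff_d_a1: "coeff (d_a1 f) i = pderiv (coeff f i)"
  by (simp add: d_a1_def coeff_map_poly)

lemma coeff_at_a1_0: "coeff (at_a1_0 f) i = at_a1_0' (coeff f i)"
  by (simp add: at_a1_0_def at_a1_0'_def coeff_map_poly)

lemma degree_d_a1_le: "degree (d_a1 f) \<le> degree f"
  by (simp add: d_a1_def map_poly_degree_leq)

lemma degree_at_a1_0_le: "degree (at_a1_0 f) \<le> degree f"
  by (simp add: at_a1_0_def map_poly_degree_leq)

lemma coeff_d_a1_mult_at_a1_0:
  "coeff (d_a1 f * at_a1_0 h) (degree f + degree h) = pderiv (lc_al f) * at_a1_0' (lc_al h)"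
  by (simp add: coeff_mult_at_degree_bounds degree_d_a1_le degree_at_a1_0_le
      coeff_d_a1 coeff_at_a1_0 lc_al_def)

lemma degree_d_a1_mult_at_a1_0_le:
  "degree (d_a1 f * at_a1_0 h) \<le> degree f + degree h"
  using degree_mult_le[of "d_a1 f" "at_a1_0 h"] degree_d_a1_le[of f] degree_at_a1_0_le[of h]
  by linarith

theorem lemma3p6:
  fixes f1 f2 :: "'a::idom poly poly"
  assumes "linear_in_a1 f1" and "linear_in_a1 f2"
  shows "pderiv (lc_al f1) * at_a1_0' (lc_al f2) - pderiv (lc_al f2) * at_a1_0' (lc_al f1) = 0
      \<or> pderiv (lc_al f1) * at_a1_0' (lc_al f2) - pderiv (lc_al f2) * at_a1_0' (lc_al f1)
          = lc_al (d_a1 f1 * at_a1_0 f2 - d_a1 f2 * at_a1_0 f1)"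
proof -
  define L where "L = pderiv (lc_al f1) * at_a1_0' (lc_al f2) - pderiv (lc_al f2) * at_a1_0' (lc_al f1)"
  define g where "g = d_a1 f1 * at_a1_0 f2 - d_a1 f2 * at_a1_0 f1"
  define k where "k = degree f1 + degree f2"
  have "coeff g k = L"
    using coeff_d_a1_mult_at_a1_0[of f1 f2] coeff_d_a1_mult_at_a1_0[of f2 f1]
    by (simp add: g_def L_def k_def add.commute)
  moreover have "degree g \<le> k"
    using degree_d_a1_mult_at_a1_0_le[of f1 f2] degree_d_a1_mult_at_a1_0_le[of f2 f1]
    unfolding g_def k_def by (intro degree_diff_le) (simp_all add: add.commute)
  ultimately have "L = 0 \<or> L = lc_al g"
    using coeff_at_degree_bound_eq_0_or_lead_coeff[of g k] by (simp add: lc_al_def)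
  then show ?thesis unfolding L_def g_def .
qed

end
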